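(* Let $n\in\mathbb{N}$, $\mathcal{R}\subset\mathcal{H}_n$, and let $\mathbb{T}$ be a generator set of $\mathcal{R}$. Then for all $A_1,A_2\subset[n]$, $$\{\mathcal{O}_{A_1},\mathcal{O}_{A_1^c}\}=\{\mathcal{O}_{A_2},\mathcal{O}_{A_2^c}\}\iff A_1\sim_{\mathcal{R}}A_2 .$$
   Context: $[n]=\{1,\dots,n\}$, $A^c=[n]\setminus A$. $\mathcal{H}_n$ is the computational basis $\{|i_1\dots i_n\rangle: i_j\in\{0,1\}\}$. For $|\psi\rangle=|a_1\dots a_n\rangle$ and non-empty $A=\{i_1<\dots<i_m\}\subset[n]$, $|\psi_A\rangle=|a_{i_1}\dots a_{i_m}\rangle$. For non-empty $A$, $\sim_A$ on $\mathcal{R}$ is: $|\psi\rangle\sim_A|\phi\rangle$ iff $|\psi_A\rangle=|\phi_A\rangle$; $\sim_\emptyset$ makes all elements equivalent; $\mathcal{R}/{\sim_A}$ is the set of classes. $A_1\sim_{\mathcal{R}}A_2$ iff $\{\mathcal{R}/{\sim_{A_1}},\mathcal{R}/{\sim_{A_1^c}}\}=\{\mathcal{R}/{\sim_{A_2}},\mathcal{R}/{\sim_{A_2^c}}\}$. For a set $F$ of maps $\mathcal{R}\to\mathcal{R}$, $\mathcal{G}(F)$ denotes the closure of $F$ under composition. A set $\mathbb{T}$ of maps $\mathcal{R}\to\mathcal{R}$ is a generator set of $\mathcal{R}$ if: (i) all $P,T\in\mathcal{G}(\mathbb{T})$ commute, $PT=TP$; (ii) for all $|\psi\rangle,|\phi\rangle\in\mathcal{R}$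 there is $P\in\mathcal{G}(\mathbb{T})$ with $P|\psi\rangle=|\phi\rangle$; (iii) (local invariance) for every $P\in\mathbb{T}$ and non-empty $A\subset[n]$, if $(P|\psi\rangle)_A=|\psi_A\rangle$ for some $|\psi\rangle\in\mathcal{R}$, then $(P|\phi\rangle)_A=|\phi_A\rangle$ for all $|\phi\rangle\in\mathcal{R}$. For non-empty $A\subset[n]$, $\mathcal{O}_A=\{P\in\mathcal{G}(\mathbb{T}) : \forall|\psi\rangle\in\mathcal{R},\ (P|\psi\rangle)_A=|\psi_A\rangle\}$, and $\mathcal{O}_\emptyset=\mathcal{G}(\mathbb{T})$. Operators are compared as maps on $\mathcal{R}$. *)

theory Defs
  imports Main "HOL-Library.FuncSet"
begin

text \<open>Computational basis states of n qubits: bool lists of length n;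
  position i (1-based) is the list entry at index i-1.\<close>

definition basis :: "nat \<Rightarrow> bool list set" where
  "basis n = {xs. length xs = n}"

definition qset :: "nat \<Rightarrow> nat set" where
  "qset n = {1..n}"

definition compl_q :: "nat \<Rightarrow> nat set \<Rightarrow> nat set" where
  "compl_q n A = qset n - A"

definition proj :: "nat set \<Rightarrow> bool list \<Rightarrow> bool list" where
  "proj A psi = map (\<lambda>i. psi ! (i - 1)) (sorted_list_of_set A)"

definition simA :: "bool list set \<Rightarrow> nat set \<Rightarrow> (bool list \<times> bool list) set" where
  "simA R A = {(x, y). x \<in> R \<and> y \<in> R \<and> (A = {} \<or> proj A x = proj A y)}"

definition classes :: "bool list set \<Rightarrow> nat set \<Rightarrow> bool list set set" where
  "classes R A = R // simA R A"

definition sim_R :: "nat \<Rightarrow> bool list set \<Rightarrow> nat set \<Rightarrow> nat set \<Rightarrow> bool" where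
  "sim_R n R A1 A2 \<longleftrightarrow>
     {classes R A1, classes R (compl_q n A1)} = {classes R A2, classes R (compl_q n A2)}"

inductive_set gen :: "('a \<Rightarrow> 'a) set \<Rightarrow> ('a \<Rightarrow> 'a) set" for F where
  base: "P \<in> F \<Longrightarrow> P \<in> gen F"
| comp: "P \<in> gen F \<Longrightarrow> Q \<in> gen F \<Longrightarrow> P \<circ> Q \<in> gen F"

definition generator_set ::
  "nat \<Rightarrow> bool list set \<Rightarrow> (bool list \<Rightarrow> bool list) set \<Rightarrow> bool" where
  "generator_set n R T \<longleftrightarrow>
     (\<forall>P\<in>T. \<forall>x\<in>R. P x \<in> R) \<and>
     (\<forall>P\<in>gen T. \<forall>Q\<in>gen T. \<forall>x\<in>R. P (Q x) = Q (P x)) \<and>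
     (\<forall>psi\<in>R. \<forall>phi\<in>R. \<exists>P\<in>gen T. P psi = phi) \<and>
     (\<forall>P\<in>T. \<forall>A. A \<noteq> {} \<longrightarrow> A \<subseteq> qset n \<longrightarrow>
        (\<exists>psi\<in>R. proj A (P psi) = proj A psi) \<longrightarrow>
        (\<forall>phi\<in>R. proj A (P phi) = proj A phi))"

text \<open>O_A, with operators identified as maps on R (restricted to R).\<close>
definition Ocal ::
  "bool list set \<Rightarrow> (bool list \<Rightarrow> bool list) set \<Rightarrow> nat set \<Rightarrow> (bool list \<Rightarrow> bool list) set" where
  "Ocal R T A =
     (if A = {} then (\<lambda>P. restrict P R) ` gen T
      else (\<lambda>P. restrict P R) ` {P \<in> gen T. \<forall>psi\<in>R. proj A (P psi) = proj A psi})"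

end

theory Submission
  imports Defs
begin

text \<open>Local invariance for the singletons \<open>{i}\<close> shows that every operator of
  \<open>\<G>(\<T>)\<close> either preserves or flips qubit \<open>i\<close> uniformly on \<open>\<R>\<close>, so an operator that
  fixes the \<open>A\<close>-part of a single state fixes it on all of \<open>\<R>\<close>. As \<open>\<G>(\<T>)\<close> acts
  transitively on \<open>\<R>\<close>, every pair \<open>\<psi> \<sim>\<^sub>A \<phi>\<close> is realised by some operator of
  \<open>\<O>\<^sub>A\<close>; hence \<open>\<O>\<^sub>A \<subseteq> \<O>\<^sub>B\<close> iff \<open>\<sim>\<^sub>A\<close> refines \<open>\<sim>\<^sub>B\<close>, and \<open>\<O>\<^sub>A = \<O>\<^sub>B\<close> iff
  \<open>\<R>/\<sim>\<^sub>A = \<R>/\<sim>\<^sub>B\<close>. Comparing the two doubletons then gives the theorem.\<close>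

lemma quotient_eq_imp_subset:
  assumes "equiv A r" "equiv A s" "A // r = A // s"
  shows "r \<subseteq> s"
proof
  fix p assume "p \<in> r"
  then obtain x y where p: "p = (x, y)" and "(x, y) \<in> r" by (cases p) blast
  then have "x \<in> A"
    using equiv_class_eq_iff[OF assms(1)] by blast
  then have "r `` {x} \<in> A // s"
    using assms(3) by (metis quotientI)
  moreover have "{x, y} \<subseteq> r `` {x}"
    using equiv_class_self[OF assms(1) \<open>x \<in> A\<close>] \<open>(x, y) \<in> r\<close> by blast
  ultimately show "p \<in> s"
    using p in_quotient_imp_in_rel[OF assms(2)] by blast
qed

lemma quotient_eq_iff_eq:
  "equiv A r \<Longrightarrow> equiv A s \<Longrightarrow> A // r = A // s \<longleftrightarrow> r = s"
  by (metis quotient_eq_imp_subset subset_antisym)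

lemma doubleton_eq_iff_of_eq_iff:
  assumes "\<And>x y. x \<in> S \<Longrightarrow> y \<in> S \<Longrightarrow> f x = f y \<longleftrightarrow> g x = g y"
    and "a \<in> S" "b \<in> S" "c \<in> S" "d \<in> S"
  shows "{f a, f b} = {f c, f d} \<longleftrightarrow> {g a, g b} = {g c, g d}"
  unfolding doubleton_eq_iff using assms by metis

lemma gen_closed:
  assumes "\<forall>Q\<in>F. \<forall>x\<in>R. Q x \<in> R" "P \<in> gen F" "x \<in> R"
  shows "P x \<in> R"
  using assms(2,3) by (induction arbitrary: x rule: gen.induct) (use assms(1) in auto)

lemma gen_flips_bit_uniformly:
  assumes closed: "\<forall>Q\<in>F. \<forall>x\<in>R. Q x \<in> R"
    and local_inv: "\<forall>Q\<in>F. \<forall>psi\<in>R. \<forall>phi\<in>R. Q psi ! k = psi ! k \<longrightarrow> Q phi ! k = phi ! k"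
    and "P \<in> gen F"
  shows "\<exists>c. \<forall>x\<in>R. P x ! k = (x ! k \<noteq> c)"
  using \<open>P \<in> gen F\<close>
proof (induction rule: gen.induct)
  case (base P)
  show ?case
  proof (cases "\<exists>psi\<in>R. P psi ! k = psi ! k")
    case True
    then have "\<forall>x\<in>R. P x ! k = (x ! k \<noteq> False)" using local_inv base by blast
    then show ?thesis ..
  next
    case False
    then have "\<forall>x\<in>R. P x ! k = (x ! k \<noteq> True)" by auto
    then show ?thesis ..
  qed
next
  case (comp P Q)
  obtain c d where "\<forall>x\<in>R. P x ! k = (x ! k \<noteq> c)" "\<forall>x\<in>R. Q x ! k = (x ! k \<noteq> d)"
    using comp.IH by blast
  then have "\<forall>x\<in>R. (P \<circ> Q) x ! k = (x ! k \<noteq> (c \<noteq> d))"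
    using gen_closed[OF closed comp.hyps(2)] by auto
  then show ?case ..
qed

lemma gen_bit_invariance:
  fixes R :: "bool list set"
  assumes closed: "\<forall>Q\<in>F. \<forall>x\<in>R. Q x \<in> R"
    and local_inv: "\<forall>Q\<in>F. \<forall>psi\<in>R. \<forall>phi\<in>R. Q psi ! k = psi ! k \<longrightarrow> Q phi ! k = phi ! k"
    and "P \<in> gen F" "psi \<in> R" "phi \<in> R" "P psi ! k = psi ! k"
  shows "P phi ! k = phi ! k"
proof -
  have "\<exists>c. \<forall>x\<in>R. P x ! k = (x ! k \<noteq> c)"
    by (rule gen_flips_bit_uniformly[OF closed local_inv \<open>P \<in> gen F\<close>])
  then obtain c where c: "\<forall>x\<in>R. P x ! k = (x ! k \<noteq> c)" ..
  have "P psi ! k = (psi ! k \<noteq> c)" "P phi ! k = (phi ! k \<noteq> c)"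
    using c \<open>psi \<in> R\<close> \<open>phi \<in> R\<close> by blast+
  with \<open>P psi ! k = psi ! k\<close> show ?thesis
    by auto
qed

lemma
  assumes "generator_set n R T"
  shows generator_set_closed: "\<forall>P\<in>T. \<forall>x\<in>R. P x \<in> R"
    and generator_set_transitive: "psi \<in> R \<Longrightarrow> phi \<in> R \<Longrightarrow> \<exists>P\<in>gen T. P psi = phi"
    and generator_set_local_invariance:
      "P \<in> T \<Longrightarrow> A \<noteq> {} \<Longrightarrow> A \<subseteq> qset n \<Longrightarrow> psi \<in> R \<Longrightarrow>
       proj A (P psi) = proj A psi \<Longrightarrow> phi \<in> R \<Longrightarrow> proj A (P phi) = proj A phi"
  using assms unfolding generator_set_def by (simp, simp, blast)

lemma finite_subset_qset: "A \<subseteq> qset n \<Longrightarrow> finite A"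
  unfolding qset_def using finite_subset by blast

lemma proj_eq_iff: "finite A \<Longrightarrow> proj A x = proj A y \<longleftrightarrow> (\<forall>i\<in>A. x ! (i - 1) = y ! (i - 1))"
  unfolding proj_def by (simp add: map_eq_conv)

lemma proj_singleton: "proj {i} x = [x ! (i - 1)]"
  unfolding proj_def by simp

lemma simA_altdef: "simA R A = {(x, y). x \<in> R \<and> y \<in> R \<and> proj A x = proj A y}"
  unfolding simA_def proj_def by auto

lemma Ocal_altdef:
  "Ocal R T A = (\<lambda>P. restrict P R) ` {P \<in> gen T. \<forall>psi\<in>R. proj A (P psi) = proj A psi}"
  unfolding Ocal_def proj_def by simp

lemma generator_set_fixes_proj_everywhere:
  assumes g: "generator_set n R T" and P: "P \<in> gen T" and A: "A \<subseteq> qset n"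
    and psi: "psi \<in> R" "proj A (P psi) = proj A psi" and phi: "phi \<in> R"
  shows "proj A (P phi) = proj A phi"
  unfolding proj_eq_iff[OF finite_subset_qset[OF A]]
proof
  fix i assume "i \<in> A"
  then have i: "{i} \<subseteq> qset n" using A by blast
  have bit_invariance:
    "\<forall>Q\<in>T. \<forall>psi'\<in>R. \<forall>phi'\<in>R. Q psi' ! (i - 1) = psi' ! (i - 1) \<longrightarrow> Q phi' ! (i - 1) = phi' ! (i - 1)"
  proof (intro ballI impI)
    fix Q psi' phi'
    assume "Q \<in> T" "psi' \<in> R" "phi' \<in> R" "Q psi' ! (i - 1) = psi' ! (i - 1)"
    then show "Q phi' ! (i - 1) = phi' ! (i - 1)"
      using generator_set_local_invariance[OF g \<open>Q \<in> T\<close> _ i \<open>psi' \<in> R\<close> _ \<open>phi' \<in> R\<close>]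
      by (simp add: proj_singleton)
  qed
  have "P psi ! (i - 1) = psi ! (i - 1)"
    using psi(2) \<open>i \<in> A\<close> unfolding proj_eq_iff[OF finite_subset_qset[OF A]] by blast
  then show "P phi ! (i - 1) = phi ! (i - 1)"
    by (rule gen_bit_invariance[OF generator_set_closed[OF g] bit_invariance P psi(1) phi])
qed

lemma Ocal_subset_iff_simA_subset:
  assumes g: "generator_set n R T" and A: "A \<subseteq> qset n"
  shows "Ocal R T A \<subseteq> Ocal R T B \<longleftrightarrow> simA R A \<subseteq> simA R B"
proof
  assume sub: "Ocal R T A \<subseteq> Ocal R T B"
  show "simA R A \<subseteq> simA R B"
  proof (clarsimp simp: simA_altdef)
    fix x y assume xy: "x \<in> R" "y \<in> R" "proj A x = proj A y"
    obtain P where P: "P \<in> gen T" "P x = y"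
      using generator_set_transitive[OF g xy(1,2)] by blast
    have "\<forall>z\<in>R. proj A (P z) = proj A z"
      using generator_set_fixes_proj_everywhere[OF g P(1) A xy(1)] P(2) xy(3) by simp
    then have "restrict P R \<in> Ocal R T B"
      using sub P(1) unfolding Ocal_altdef by blast
    then obtain Q where "Q \<in> gen T" "\<forall>z\<in>R. proj B (Q z) = proj B z" "restrict P R = restrict Q R"
      unfolding Ocal_altdef by blast
    moreover have "Q x = y"
      using \<open>restrict P R = restrict Q R\<close> xy(1) P(2) by (metis restrict_apply')
    ultimately show "proj B x = proj B y"
      using xy(1) by metis
  qed
next
  assume sub: "simA R A \<subseteq> simA R B"
  show "Ocal R T A \<subseteq> Ocal R T B"
  proof (clarsimp simp: Ocal_altdef)
    fix P assume P: "P \<in> gen T" "\<forall>psi\<in>R. proj A (P psi) = proj A psi"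
    have "(P psi, psi) \<in> simA R B" if "psi \<in> R" for psi
      using sub P that gen_closed[OF generator_set_closed[OF g] P(1) that] unfolding simA_altdef by blast
    then have "\<forall>psi\<in>R. proj B (P psi) = proj B psi"
      unfolding simA_altdef by blast
    with P(1) show "restrict P R \<in> (\<lambda>P. restrict P R) ` {P \<in> gen T. \<forall>psi\<in>R. proj B (P psi) = proj B psi}"
      by blast
  qed
qed

lemma equiv_simA: "equiv R (simA R A)"
  unfolding equiv_def refl_on_def sym_def trans_def simA_def by auto

lemma Ocal_eq_iff_classes_eq:
  assumes "generator_set n R T" "A \<subseteq> qset n" "B \<subseteq> qset n"
  shows "Ocal R T A = Ocal R T B \<longleftrightarrow> classes R A = classes R B"
proof -
  have "Ocal R T A = Ocal R T B \<longleftrightarrow> simA R A = simA R B"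
    using Ocal_subset_iff_simA_subset[OF assms(1)] assms(2,3) by blast
  also have "\<dots> \<longleftrightarrow> classes R A = classes R B"
    unfolding classes_def by (simp add: quotient_eq_iff_eq[OF equiv_simA equiv_simA])
  finally show ?thesis .
qed

theorem theorem2:
  fixes n :: nat and R :: "bool list set" and T :: "(bool list \<Rightarrow> bool list) set"
    and A1 A2 :: "nat set"
  assumes "R \<subseteq> basis n"
    and "generator_set n R T"
    and "A1 \<subseteq> qset n" and "A2 \<subseteq> qset n"
  shows "{Ocal R T A1, Ocal R T (compl_q n A1)} = {Ocal R T A2, Ocal R T (compl_q n A2)}
         \<longleftrightarrow> sim_R n R A1 A2"
  unfolding sim_R_def
proof (rule doubleton_eq_iff_of_eq_iff)
  show "Ocal R T A = Ocal R T B \<longleftrightarrow> classes R A = classes R B"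
    if "A \<in> Pow (qset n)" "B \<in> Pow (qset n)" for A B
    using Ocal_eq_iff_classes_eq[OF assms(2)] that by blast
qed (use assms(3,4) in \<open>auto simp: compl_q_def\<close>)

end
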